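(* Let $E\ge 1$ and for each environment $e=1,\dots,E$ let $p_e(x,y)$ be a (known, positive) joint density of a feature vector $x\in\mathbb{R}^p$ and outcome $y$. Let $p(z)$ be a prior on $\{0,1\}^p$. Consider the model (BIP) for data $\mathcal{D}=\{\{(x_{ei},y_{ei})\}_{i=1}^{n_e}\}_{e=1}^E$ with joint distribution $$p(z,\mathcal{D})=p(z)\prod_{e=1}^E\prod_{i=1}^{n_e}p_e(x_{ei}^z)\,g(y_{ei}\mid x_{ei}^z)\,p_e(x_{ei}^{-z}\mid x_{ei}^z,y_{ei}).$$ Then the posterior distribution satisfies $$p(z\mid\mathcal{D})\propto p(z)\prod_{e=1}^E\prod_{i=1}^{n_e}\frac{g(y_{ei}\mid x_{ei}^z)}{p_e(y_{ei}\mid x_{ei}^z)},$$ where the proportionality constant does not depend on $z$.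
   Context: For $z\in\{0,1\}^p$, $x^z$ is the subvector of $x$ with coordinates $j$ such that $z^{(j)}=1$, and $x^{-z}$ is the subvector of the remaining coordinates. The densities $p_e(x^z)$, $p_e(y\mid x^z)$ and $p_e(x^{-z}\mid x^z,y)$ are the marginal and conditionals derived from $p_e(x,y)$. The pooled conditional is $g(y\mid x^z):=\frac{\sum_{e=1}^E\int p_e(x,y)\,\mathrm{d}x^{-z}}{\sum_{e=1}^E p_e(x^z)}$. *)

theory Defs
  imports "HOL-Probability.Probability"
begin

(* A selection z in {0,1}^p is encoded as the set of selected indices, z \<subseteq> {..<p}.
   x^z = restrict x z,  x^{-z} = restrict x ({..<p} - z).
   A joint density of environment e is f :: (nat => real) => real => real
   w.r.t. (PiM {..<p} lborel) \<Otimes> lborel. *)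

definition Xspace :: "nat \<Rightarrow> (nat \<Rightarrow> real) measure" where
  "Xspace p = PiM {..<p} (\<lambda>_. lborel)"

definition marg_xy :: "nat \<Rightarrow> ((nat \<Rightarrow> real) \<Rightarrow> real \<Rightarrow> real) \<Rightarrow> nat set
    \<Rightarrow> (nat \<Rightarrow> real) \<Rightarrow> real \<Rightarrow> ennreal" where
  "marg_xy p f z xz y =
     (\<integral>\<^sup>+ u. ennreal (f (merge z ({..<p} - z) (xz, u)) y) \<partial>(PiM ({..<p} - z) (\<lambda>_. lborel)))"

definition marg_x :: "nat \<Rightarrow> ((nat \<Rightarrow> real) \<Rightarrow> real \<Rightarrow> real) \<Rightarrow> nat set
    \<Rightarrow> (nat \<Rightarrow> real) \<Rightarrow> ennreal" where
  "marg_x p f z xz = (\<integral>\<^sup>+ y. marg_xy p f z xz y \<partial>lborel)"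

definition dens_xy :: "nat \<Rightarrow> ((nat \<Rightarrow> real) \<Rightarrow> real \<Rightarrow> real) \<Rightarrow> nat set
    \<Rightarrow> (nat \<Rightarrow> real) \<Rightarrow> real \<Rightarrow> real" where
  "dens_xy p f z xz y = enn2real (marg_xy p f z xz y)"

definition dens_x :: "nat \<Rightarrow> ((nat \<Rightarrow> real) \<Rightarrow> real \<Rightarrow> real) \<Rightarrow> nat set
    \<Rightarrow> (nat \<Rightarrow> real) \<Rightarrow> real" where
  "dens_x p f z xz = enn2real (marg_x p f z xz)"

definition cond_y :: "nat \<Rightarrow> ((nat \<Rightarrow> real) \<Rightarrow> real \<Rightarrow> real) \<Rightarrow> nat set
    \<Rightarrow> (nat \<Rightarrow> real) \<Rightarrow> real \<Rightarrow> real" where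
  "cond_y p f z xz y = dens_xy p f z xz y / dens_x p f z xz"

(* p_e(x^{-z} | x^z, y), evaluated at the full vector x *)
definition cond_rest :: "nat \<Rightarrow> ((nat \<Rightarrow> real) \<Rightarrow> real \<Rightarrow> real) \<Rightarrow> nat set
    \<Rightarrow> (nat \<Rightarrow> real) \<Rightarrow> real \<Rightarrow> real" where
  "cond_rest p f z x y = f x y / dens_xy p f z (restrict x z) y"

(* pooled conditional g(y | x^z) *)
definition pooled :: "nat \<Rightarrow> nat \<Rightarrow> (nat \<Rightarrow> (nat \<Rightarrow> real) \<Rightarrow> real \<Rightarrow> real) \<Rightarrow> nat set
    \<Rightarrow> (nat \<Rightarrow> real) \<Rightarrow> real \<Rightarrow> real" where
  "pooled p E pe z xz y =
     (\<Sum>e=1..E. dens_xy p (pe e) z xz y) / (\<Sum>e=1..E. dens_x p (pe e) z xz)"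

definition bip_joint :: "nat \<Rightarrow> nat \<Rightarrow> (nat \<Rightarrow> (nat \<Rightarrow> real) \<Rightarrow> real \<Rightarrow> real)
    \<Rightarrow> (nat set \<Rightarrow> real) \<Rightarrow> (nat \<Rightarrow> nat) \<Rightarrow> (nat \<Rightarrow> nat \<Rightarrow> nat \<Rightarrow> real)
    \<Rightarrow> (nat \<Rightarrow> nat \<Rightarrow> real) \<Rightarrow> nat set \<Rightarrow> real" where
  "bip_joint p E pe prior n X Y z =
     prior z * (\<Prod>e=1..E. \<Prod>i=1..n e.
        dens_x p (pe e) z (restrict (X e i) z)
        * pooled p E pe z (restrict (X e i) z) (Y e i)
        * cond_rest p (pe e) z (X e i) (Y e i))"

definition bip_posterior :: "nat \<Rightarrow> nat \<Rightarrow> (nat \<Rightarrow> (nat \<Rightarrow> real) \<Rightarrow> real \<Rightarrow> real)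
    \<Rightarrow> (nat set \<Rightarrow> real) \<Rightarrow> (nat \<Rightarrow> nat) \<Rightarrow> (nat \<Rightarrow> nat \<Rightarrow> nat \<Rightarrow> real)
    \<Rightarrow> (nat \<Rightarrow> nat \<Rightarrow> real) \<Rightarrow> nat set \<Rightarrow> real" where
  "bip_posterior p E pe prior n X Y z =
     bip_joint p E pe prior n X Y z / (\<Sum>z'\<in>Pow {..<p}. bip_joint p E pe prior n X Y z')"

end

theory Submission
  imports Defs
begin

text \<open>For every data point the three BIP factors recombine, by the chain rule
  \<open>p\<^sub>e(x, y) = p\<^sub>e(x\<^sup>z) p\<^sub>e(y | x\<^sup>z) p\<^sub>e(x\<^sup>-\<^sup>z | x\<^sup>z, y)\<close>, into
  \<open>p\<^sub>e(x, y) \<cdot> g(y | x\<^sup>z) / p\<^sub>e(y | x\<^sup>z)\<close>. The product of the \<open>p\<^sub>e(x\<^sub>e\<^sub>i, y\<^sub>e\<^sub>i)\<close>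
  is positive and independent of \<open>z\<close>, so it cancels when the joint is normalised.
  The recombination is a field identity that survives HOL's \<open>x / 0 = 0\<close>.\<close>

definition bip_ratio :: "nat \<Rightarrow> nat \<Rightarrow> (nat \<Rightarrow> (nat \<Rightarrow> real) \<Rightarrow> real \<Rightarrow> real)
    \<Rightarrow> (nat \<Rightarrow> nat) \<Rightarrow> (nat \<Rightarrow> nat \<Rightarrow> nat \<Rightarrow> real) \<Rightarrow> (nat \<Rightarrow> nat \<Rightarrow> real) \<Rightarrow> nat set \<Rightarrow> real"
  where
  "bip_ratio p E pe n X Y z = (\<Prod>e=1..E. \<Prod>i=1..n e.
     pooled p E pe z (restrict (X e i) z) (Y e i) / cond_y p (pe e) z (restrict (X e i) z) (Y e i))"

lemma dens_x_mult_cond_rest_eq: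
  "dens_x p f z (restrict x z) * g * cond_rest p f z x y
     = f x y * (g / cond_y p f z (restrict x z) y)"
  unfolding cond_rest_def cond_y_def
  by (simp add: divide_inverse inverse_mult_distrib mult_ac)

lemma pooled_nonneg: "pooled p E pe z xz y \<ge> 0"
  unfolding pooled_def dens_xy_def dens_x_def
  by (intro divide_nonneg_nonneg sum_nonneg) auto

lemma cond_y_nonneg: "cond_y p f z xz y \<ge> 0"
  unfolding cond_y_def dens_xy_def dens_x_def by simp

lemma bip_ratio_nonneg: "bip_ratio p E pe n X Y z \<ge> 0"
  unfolding bip_ratio_def
  by (intro prod_nonneg divide_nonneg_nonneg pooled_nonneg cond_y_nonneg)

lemma bip_joint_eq_likelihood_ratio:
  "bip_joint p E pe prior n X Y z
     = (\<Prod>e=1..E. \<Prod>i=1..n e. pe e (X e i) (Y e i)) * (prior z * bip_ratio p E pe n X Y z)"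
  unfolding bip_joint_def bip_ratio_def dens_x_mult_cond_rest_eq prod.distrib
  by (rule mult.left_commute)

lemma normalised_scaled_weights_proportional:
  fixes w :: "'a \<Rightarrow> real"
  assumes "finite S" and w_nonneg: "\<And>z. z \<in> S \<Longrightarrow> w z \<ge> 0" and "F \<noteq> 0"
  shows "\<exists>C > 0. \<forall>z \<in> S. F * w z / (\<Sum>z'\<in>S. F * w z') = C * w z"
proof (cases "(\<Sum>z\<in>S. w z) = 0")
  case True
  then have "\<forall>z \<in> S. w z = 0"
    using sum_nonneg_eq_0_iff[OF \<open>finite S\<close>] w_nonneg by blast
  then show ?thesis by (intro exI[of _ 1]) auto
next
  case False
  then have "(\<Sum>z\<in>S. w z) > 0"
    using sum_nonneg[of S w] w_nonneg by fastforce
  moreover have "F * w z / (\<Sum>z'\<in>S. F * w z') = 1 / (\<Sum>z\<in>S. w z) * w z" for z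
    using \<open>F \<noteq> 0\<close> by (simp add: sum_distrib_left[symmetric])
  ultimately show ?thesis by (intro exI[of _ "1 / (\<Sum>z\<in>S. w z)"]) auto
qed

theorem proposition2:
  fixes p E :: nat
    and pe :: "nat \<Rightarrow> (nat \<Rightarrow> real) \<Rightarrow> real \<Rightarrow> real"
    and prior :: "nat set \<Rightarrow> real"
    and n :: "nat \<Rightarrow> nat"
    and X :: "nat \<Rightarrow> nat \<Rightarrow> nat \<Rightarrow> real"
    and Y :: "nat \<Rightarrow> nat \<Rightarrow> real"
  assumes E_pos: "E \<ge> 1"
    and meas: "\<And>e. e \<in> {1..E} \<Longrightarrow>
        (\<lambda>(x, y). pe e x y) \<in> borel_measurable (Xspace p \<Otimes>\<^sub>M lborel)"
    and pos: "\<And>e x y. e \<in> {1..E} \<Longrightarrow> x \<in> space (Xspace p) \<Longrightarrow> pe e x y > 0"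
    and dens: "\<And>e. e \<in> {1..E} \<Longrightarrow>
        (\<integral>\<^sup>+ w. ennreal (pe e (fst w) (snd w)) \<partial>(Xspace p \<Otimes>\<^sub>M lborel)) = 1"
    and fin_xy: "\<And>e z xz y. e \<in> {1..E} \<Longrightarrow> z \<subseteq> {..<p} \<Longrightarrow>
        xz \<in> space (PiM z (\<lambda>_. lborel)) \<Longrightarrow> marg_xy p (pe e) z xz y < \<infinity>"
    and fin_x: "\<And>e z xz. e \<in> {1..E} \<Longrightarrow> z \<subseteq> {..<p} \<Longrightarrow>
        xz \<in> space (PiM z (\<lambda>_. lborel)) \<Longrightarrow> marg_x p (pe e) z xz < \<infinity>"
    and prior_nonneg: "\<And>z. z \<subseteq> {..<p} \<Longrightarrow> prior z \<ge> 0"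
    and prior_sum: "(\<Sum>z\<in>Pow {..<p}. prior z) = 1"
    and data: "\<And>e i. e \<in> {1..E} \<Longrightarrow> i \<in> {1..n e} \<Longrightarrow> X e i \<in> space (Xspace p)"
  shows "\<exists>C > 0. \<forall>z \<in> Pow {..<p}.
           bip_posterior p E pe prior n X Y z =
             C * prior z * (\<Prod>e=1..E. \<Prod>i=1..n e.
                 pooled p E pe z (restrict (X e i) z) (Y e i)
                 / cond_y p (pe e) z (restrict (X e i) z) (Y e i))"
proof -
  have likelihood_pos: "(\<Prod>e=1..E. \<Prod>i=1..n e. pe e (X e i) (Y e i)) > 0"
    by (intro prod_pos) (use pos data in auto)
  have "\<exists>C > 0. \<forall>z \<in> Pow {..<p}.
          bip_posterior p E pe prior n X Y z = C * (prior z * bip_ratio p E pe n X Y z)"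
    unfolding bip_posterior_def bip_joint_eq_likelihood_ratio
    using prior_nonneg bip_ratio_nonneg
    by (intro normalised_scaled_weights_proportional[OF _ _ likelihood_pos[THEN dual_order.strict_implies_not_eq]])
      auto
  then show ?thesis
    unfolding bip_ratio_def by (simp add: mult.assoc)
qed

end
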